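(* Let $n\in\mathbb N$. Then there exists $k_0\in\mathbb N$ such that for all $k,j\in\mathbb N$ with $j\ge k\ge k_0$, $$p^{(j)}_n\le 2^{j-k}p^{(k)}_n\prod_{i=1}^{j-k}\left(\log p^{(k)}_n+i\log i\,\log\log p^{(k)}_n\right).$$
   Context: Let $p_n$ denote the $n$-th prime number. Define $p^{(0)}_n=n$ and recursively $p^{(k+1)}_n=p_{p^{(k)}_n}$ for $k\in\mathbb N_0$. $\log$ is the natural logarithm; an empty product equals $1$. *)

theory Defs
  imports Complex_Main "HOL-Computational_Algebra.Primes" "HOL-Library.Infinite_Set"
begin

text \<open>The n-th prime, 1-indexed: nth_prime 1 = 2, nth_prime 2 = 3, ...
  (enumerate is 0-indexed, hence the shift). Only meaningful for n >= 1.\<close>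
definition nth_prime :: "nat \<Rightarrow> nat" where
  "nth_prime n = enumerate {p. prime p} (n - 1)"

definition iter_prime :: "nat \<Rightarrow> nat \<Rightarrow> nat" where
  "iter_prime k n = (nth_prime ^^ k) n"

end

theory Submission
  imports Defs "HOL-Real_Asymp.Real_Asymp"
begin

(* Chebyshev's argument (every prime power dividing C(2N,N) is at most 2N, while
   C(2N,N) >= 4^N/(2N)) gives (x - 2) ln 2 <= (pi(x) + 1) ln x, hence p_y <= 2 y ln y for all
   large y.  Put x = p^(k)_n and let B_m = iter_bound x m be the right-hand side for j = k + m.  Once
   ln ln x >= 6 one has ln B_m <= ln x + (m+1) ln(m+1) ln ln x, so by induction on m
   p^(k+m+1)_n <= 2 B_m ln B_m <= B_(m+1).  Since p^(k)_n >= k, a large k0 makes x both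
   >= exp (exp 6) and in the range of the bound on p_y. *)

definition prime_pi :: "nat \<Rightarrow> nat" where
  "prime_pi x = card {p. prime p \<and> p \<le> x}"

lemma prime_pi_mono: "x \<le> y \<Longrightarrow> prime_pi x \<le> prime_pi y"
  unfolding prime_pi_def by (rule card_mono) auto

lemma multiplicity_eq_card_power_dvd:
  fixes p m K :: nat
  assumes p: "prime p" and m: "0 < m" "m \<le> K"
  shows "multiplicity p m = card {i \<in> {1..K}. p ^ i dvd m}"
proof -
  have "1 < p" using p prime_gt_1_nat by blast
  have "multiplicity p m < 2 ^ multiplicity p m" by simp
  also have "\<dots> \<le> p ^ multiplicity p m" using \<open>1 < p\<close> by (intro power_mono) auto
  also have "\<dots> \<le> m" using m by (intro dvd_imp_le multiplicity_dvd) auto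
  finally have "multiplicity p m \<le> K" using m by simp
  have dvd_iff: "p ^ i dvd m \<longleftrightarrow> i \<le> multiplicity p m" for i
    using m \<open>1 < p\<close> by (intro power_dvd_iff_le_multiplicity) auto
  have "{i \<in> {1..K}. p ^ i dvd m} = {1..multiplicity p m}"
    using \<open>multiplicity p m \<le> K\<close> by (auto simp only: dvd_iff atLeastAtMost_iff mem_Collect_eq)
  then show ?thesis by simp
qed

lemma Suc_div_eq_div_plus_dvd:
  fixes n q :: nat
  shows "Suc n div q = n div q + (if q dvd Suc n then 1 else 0)"
  unfolding div_Suc dvd_eq_mod_eq_0 by simp

lemma multiplicity_fact_eq_sum_div:
  fixes p n K :: nat
  assumes p: "prime p" and "n \<le> K"
  shows "multiplicity p (fact n) = (\<Sum>i=1..K. n div p ^ i)"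
  using \<open>n \<le> K\<close>
proof (induction n)
  case (Suc n)
  have "multiplicity p (fact (Suc n)) = multiplicity p (Suc n * fact n)"
    by (simp only: fact_Suc of_nat_id)
  also have "\<dots> = multiplicity p (fact n) + multiplicity p (Suc n)"
    using p by (subst prime_elem_multiplicity_mult_distrib) auto
  also have "multiplicity p (fact n) = (\<Sum>i=1..K. n div p ^ i)"
    using Suc by simp
  also have "multiplicity p (Suc n) = card {i \<in> {1..K}. p ^ i dvd Suc n}"
    using p Suc.prems by (intro multiplicity_eq_card_power_dvd) auto
  also have "\<dots> = (\<Sum>i=1..K. if p ^ i dvd Suc n then 1 else 0)"
    unfolding card_eq_sum by (rule sum.inter_filter) simp
  also have "(\<Sum>i=1..K. n div p ^ i) + (\<Sum>i=1..K. if p ^ i dvd Suc n then 1 else 0)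
      = (\<Sum>i=1..K. Suc n div p ^ i)"
    by (simp only: sum.distrib[symmetric] Suc_div_eq_div_plus_dvd)
  finally show ?case .
qed simp

lemma double_div_le:
  fixes n q :: nat
  shows "2 * (n div q) \<le> 2 * n div q" and "2 * n div q \<le> 2 * (n div q) + 1"
proof -
  have eq: "2 * n div q = 2 * (n div q) + 2 * (n mod q) div q"
    using div_add1_eq[of n n q] by (simp only: mult_2)
  have "2 * (n mod q) div q < 2"
  proof (cases "q = 0")
    case False
    then show ?thesis by (intro less_mult_imp_div_less) simp
  qed simp
  with eq show "2 * (n div q) \<le> 2 * n div q" and "2 * n div q \<le> 2 * (n div q) + 1"
    by linarith+
qed

lemma multiplicity_central_binomial:
  fixes p N :: nat
  assumes p: "prime p"
  shows "multiplicity p ((2 * N) choose N) = (\<Sum>i=1..2*N. 2 * N div p ^ i - 2 * (N div p ^ i))"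
proof -
  have "(fact (2 * N) :: nat) = fact N * fact N * ((2 * N) choose N)"
    using binomial_fact_lemma[of N "2 * N"] by simp
  then have "multiplicity p (fact (2 * N) :: nat)
      = 2 * multiplicity p (fact N :: nat) + multiplicity p ((2 * N) choose N)"
    using p by (simp add: prime_elem_multiplicity_mult_distrib)
  moreover have "multiplicity p (fact (2 * N) :: nat) = (\<Sum>i=1..2*N. 2 * N div p ^ i)"
    using p by (intro multiplicity_fact_eq_sum_div) auto
  moreover have "multiplicity p (fact N :: nat) = (\<Sum>i=1..2*N. N div p ^ i)"
    using p by (intro multiplicity_fact_eq_sum_div) auto
  ultimately have "multiplicity p ((2 * N) choose N)
      = (\<Sum>i=1..2*N. 2 * N div p ^ i) - (\<Sum>i=1..2*N. 2 * (N div p ^ i))"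
    by (simp add: sum_distrib_left)
  also have "\<dots> = (\<Sum>i=1..2*N. 2 * N div p ^ i - 2 * (N div p ^ i))"
    by (rule sum_subtractf_nat[symmetric]) (rule double_div_le(1))
  finally show ?thesis .
qed

(* Each term of the sum in multiplicity_central_binomial is 0 or 1, and it vanishes once
   p ^ i > 2 * N. *)
lemma prime_power_multiplicity_central_binomial_le:
  fixes p N :: nat
  assumes p: "prime p" and "0 < N"
  shows "p ^ multiplicity p ((2 * N) choose N) \<le> 2 * N"
proof (rule ccontr)
  define e where "e = multiplicity p ((2 * N) choose N)"
  assume "\<not> p ^ multiplicity p ((2 * N) choose N) \<le> 2 * N"
  then have big: "2 * N < p ^ e" by (simp add: e_def)
  with \<open>0 < N\<close> have "0 < e" by (cases e) auto
  have vanish: "2 * N div p ^ i - 2 * (N div p ^ i) = 0" if "\<not> i < e" for i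
  proof -
    have "p ^ e \<le> p ^ i" using p that by (intro power_increasing) (auto dest: prime_gt_0_nat)
    with big show ?thesis by simp
  qed
  have "e = (\<Sum>i=1..2*N. 2 * N div p ^ i - 2 * (N div p ^ i))"
    unfolding e_def using p by (rule multiplicity_central_binomial)
  also have "\<dots> = (\<Sum>i\<in>{1..2*N} \<inter> {..<e}. 2 * N div p ^ i - 2 * (N div p ^ i))"
  proof (rule sum.mono_neutral_right)
    show "\<forall>i\<in>{1..2*N} - {1..2*N} \<inter> {..<e}. 2 * N div p ^ i - 2 * (N div p ^ i) = 0"
      by (intro ballI vanish) auto
  qed auto
  also have "\<dots> \<le> card ({1..2*N} \<inter> {..<e})"
    unfolding card_eq_sum
  proof (rule sum_mono)
    fix i
    show "2 * N div p ^ i - 2 * (N div p ^ i) \<le> 1"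
      using double_div_le(2)[of N "p ^ i"] by linarith
  qed
  also have "\<dots> \<le> card {1..<e}"
    by (intro card_mono) auto
  finally show False using \<open>0 < e\<close> by simp
qed

lemma central_binomial_le_power_prime_pi:
  fixes N :: nat
  assumes "0 < N"
  shows "(2 * N) choose N \<le> (2 * N) ^ prime_pi (2 * N)"
proof -
  define C where "C = (2 * N) choose N"
  have "prime_factors C \<subseteq> {p. prime p \<and> p \<le> 2 * N}"
  proof
    fix p assume "p \<in> prime_factors C"
    then have "prime p" and "p dvd C" by auto
    have "C dvd fact (2 * N)"
      using binomial_fact_lemma[of N "2 * N"] unfolding C_def
      by (metis dvd_triv_right mult_2 add_diff_cancel_right' le_add2)
    with \<open>p dvd C\<close> have "p dvd fact (2 * N)"
      by (rule dvd_trans)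
    with \<open>prime p\<close> show "p \<in> {p. prime p \<and> p \<le> 2 * N}"
      by (simp add: prime_dvd_fact_iff)
  qed
  then have "card (prime_factors C) \<le> prime_pi (2 * N)"
    unfolding prime_pi_def by (intro card_mono) auto
  have "C = (\<Prod>p\<in>prime_factors C. p ^ multiplicity p C)"
    by (rule prime_factorization_nat) (simp add: C_def)
  also have "\<dots> \<le> (\<Prod>p\<in>prime_factors C. 2 * N)"
    unfolding C_def using assms
    by (intro prod_mono) (auto intro: prime_power_multiplicity_central_binomial_le dest: in_prime_factors_imp_prime)
  also have "\<dots> = (2 * N) ^ card (prime_factors C)"
    by simp
  also have "\<dots> \<le> (2 * N) ^ prime_pi (2 * N)"
    using assms \<open>card (prime_factors C) \<le> prime_pi (2 * N)\<close> by (intro power_increasing) auto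
  finally show ?thesis unfolding C_def .
qed

lemma prime_pi_double_lower_bound:
  fixes N :: nat
  assumes "0 < N"
  shows "2 * real N * ln 2 \<le> (real (prime_pi (2 * N)) + 1) * ln (2 * real N)"
proof -
  let ?c = "prime_pi (2 * N)"
  have "(2::real) ^ (2 * N) = 4 ^ N"
    by (simp add: power_mult)
  also have "\<dots> \<le> 2 * real N * real ((2 * N) choose N)"
    using central_binomial_lower_bound[OF assms] assms by (simp add: field_simps)
  also have "\<dots> \<le> 2 * real N * (2 * real N) ^ ?c"
  proof (rule mult_left_mono)
    show "real ((2 * N) choose N) \<le> (2 * real N) ^ ?c"
      using central_binomial_le_power_prime_pi[OF assms]
      by (metis of_nat_le_iff of_nat_mult of_nat_numeral of_nat_power)
  qed simp
  also have "\<dots> = (2 * real N) ^ (?c + 1)"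
    by simp
  finally have "ln ((2::real) ^ (2 * N)) \<le> ln ((2 * real N) ^ (?c + 1))"
    using assms by (subst ln_le_cancel_iff) auto
  moreover have "ln ((2::real) ^ (2 * N)) = 2 * real N * ln 2"
    using ln_realpow[of 2 "2 * N"] by simp
  moreover have "ln ((2 * real N) ^ (?c + 1)) = (real ?c + 1) * ln (2 * real N)"
    using ln_realpow[of "2 * real N" "?c + 1"] assms by simp
  ultimately show ?thesis
    by linarith
qed

lemma prime_pi_lower_bound:
  fixes x :: real
  assumes "2 \<le> x"
  shows "(x - 2) * ln 2 \<le> (real (prime_pi (nat \<lfloor>x\<rfloor>)) + 1) * ln x"
proof -
  define N where "N = nat \<lfloor>x\<rfloor> div 2"
  have "2 * N \<le> nat \<lfloor>x\<rfloor>" and "nat \<lfloor>x\<rfloor> \<le> 2 * N + 1"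
    unfolding N_def by linarith+
  moreover have "real (nat \<lfloor>x\<rfloor>) \<le> x" "x < real (nat \<lfloor>x\<rfloor>) + 1"
    using assms by linarith+
  ultimately have N: "0 < N" "x - 2 \<le> 2 * real N" "2 * real N \<le> x"
    using assms by linarith+
  have "(x - 2) * ln 2 \<le> 2 * real N * ln 2"
    using N by (intro mult_right_mono) auto
  also have "\<dots> \<le> (real (prime_pi (2 * N)) + 1) * ln (2 * real N)"
    using N by (intro prime_pi_double_lower_bound)
  also have "\<dots> \<le> (real (prime_pi (nat \<lfloor>x\<rfloor>)) + 1) * ln x"
    using N \<open>2 * N \<le> nat \<lfloor>x\<rfloor>\<close>
    by (intro mult_mono add_right_mono of_nat_mono prime_pi_mono) auto
  finally show ?thesis .
qed

lemma enumerate_le_if_less_card: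
  fixes S :: "nat set"
  assumes S: "infinite S" and n: "n < card {s \<in> S. s \<le> M}"
  shows "enumerate S n \<le> M"
proof (rule ccontr)
  assume "\<not> enumerate S n \<le> M"
  have "{s \<in> S. s \<le> M} \<subseteq> enumerate S ` {..<n}"
  proof
    fix s assume s: "s \<in> {s \<in> S. s \<le> M}"
    then obtain i where i: "enumerate S i = s"
      using enumerate_Ex[OF S] by blast
    have "i < n"
    proof (rule ccontr)
      assume "\<not> i < n"
      then have "enumerate S n \<le> s" using S unfolding i[symmetric] by simp
      with s \<open>\<not> enumerate S n \<le> M\<close> show False by simp
    qed
    with i show "s \<in> enumerate S ` {..<n}" by blast
  qed
  then have "card {s \<in> S. s \<le> M} \<le> card (enumerate S ` {..<n})"
    by (intro card_mono) auto
  also have "\<dots> \<le> n"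
    using card_image_le[of "{..<n}" "enumerate S"] by simp
  finally show False using n by simp
qed

lemma enumerate_ge_add:
  fixes S :: "nat set"
  assumes S: "infinite S" and lower: "\<And>s. s \<in> S \<Longrightarrow> a \<le> s"
  shows "a + n \<le> enumerate S n"
proof (induction n)
  case 0
  show ?case using lower enumerate_in_set[OF S] by simp
next
  case (Suc n)
  then show ?case using enumerate_step[OF S, of n] by simp
qed

lemma nth_prime_gt: "1 \<le> y \<Longrightarrow> y < nth_prime y"
  unfolding nth_prime_def using enumerate_ge_add[OF primes_infinite, of 2 "y - 1"]
  by (simp add: prime_ge_2_nat)

lemma nth_prime_le_if_le_prime_pi: "1 \<le> y \<Longrightarrow> y \<le> prime_pi M \<Longrightarrow> nth_prime y \<le> M"
  unfolding nth_prime_def prime_pi_def by (intro enumerate_le_if_less_card primes_infinite) simp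

lemma ln_one_plus_ge:
  fixes t :: real
  assumes "0 \<le> t"
  shows "2 * t / (t + 2) \<le> ln (1 + t)"
proof -
  let ?f = "\<lambda>s::real. ln (1 + s) - 2 * s / (s + 2)"
  have "?f 0 \<le> ?f t"
  proof (rule DERIV_nonneg_imp_nondecreasing[OF assms])
    fix s :: real assume s: "0 \<le> s" "s \<le> t"
    have "(?f has_real_derivative (1 / (1 + s) - 4 / (s + 2)\<^sup>2)) (at s)"
      using s by (auto intro!: derivative_eq_intros simp: field_simps power2_eq_square)
    moreover have "4 / (s + 2)\<^sup>2 \<le> 1 / (1 + s)"
      using s by (simp add: divide_simps power2_eq_square) (simp add: algebra_simps)
    ultimately show "\<exists>y. (?f has_real_derivative y) (at s) \<and> 0 \<le> y"
      by force
  qed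
  then show ?thesis by simp
qed

lemma nth_prime_le_if_ln_bound:
  fixes y :: nat and x :: real
  assumes "1 \<le> y" and "2 \<le> x" and "(real y + 1) * ln x \<le> (x - 2) * ln 2"
  shows "real (nth_prime y) \<le> x"
proof -
  have "(real y + 1) * ln x \<le> (real (prime_pi (nat \<lfloor>x\<rfloor>)) + 1) * ln x"
    using assms(3) prime_pi_lower_bound[OF \<open>2 \<le> x\<close>] by linarith
  then have "y \<le> prime_pi (nat \<lfloor>x\<rfloor>)"
    using \<open>2 \<le> x\<close> by (simp add: mult_le_cancel_right)
  then have "real (nth_prime y) \<le> real (nat \<lfloor>x\<rfloor>)"
    using \<open>1 \<le> y\<close> by (intro of_nat_mono nth_prime_le_if_le_prime_pi)
  also have "\<dots> \<le> x"
    using \<open>2 \<le> x\<close> by linarith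
  finally show ?thesis .
qed

lemma eventually_nth_prime_le:
  "eventually (\<lambda>y. real (nth_prime y) \<le> 2 * real y * ln (real y)) sequentially"
proof -
  \<comment> \<open>real_asymp cannot decide the sign of 2 ln 2 - 1, hence the detour via 2/3\<close>
  have "2 / 3 \<le> ln (2::real)"
    using ln_one_plus_ge[of 1] by simp
  have "eventually (\<lambda>t::real. 1 \<le> t \<and> 2 \<le> 2 * t * ln t
      \<and> (t + 1) * ln (2 * t * ln t) \<le> (2 * t * ln t - 2) * (2 / 3)) at_top"
    by (intro eventually_conj; real_asymp)
  then have "eventually (\<lambda>y. 1 \<le> real y \<and> 2 \<le> 2 * real y * ln (real y)
      \<and> (real y + 1) * ln (2 * real y * ln (real y)) \<le> (2 * real y * ln (real y) - 2) * (2 / 3))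
      sequentially"
    using filterlim_real_sequentially by (rule eventually_compose_filterlim)
  then show ?thesis
  proof (rule eventually_mono)
    fix y :: nat
    let ?x = "2 * real y * ln (real y)"
    assume y: "1 \<le> real y \<and> 2 \<le> ?x \<and> (real y + 1) * ln ?x \<le> (?x - 2) * (2 / 3)"
    then have "(?x - 2) * (2 / 3) \<le> (?x - 2) * ln 2"
      using \<open>2 / 3 \<le> ln 2\<close> by (intro mult_left_mono) auto
    with y show "real (nth_prime y) \<le> ?x"
      by (intro nth_prime_le_if_ln_bound) auto
  qed
qed

lemma iter_prime_Suc: "iter_prime (Suc k) n = nth_prime (iter_prime k n)"
  by (simp add: iter_prime_def)

lemma iter_prime_add: "iter_prime (k + m) n = iter_prime m (iter_prime k n)"
  unfolding iter_prime_def by (subst add.commute) (simp add: funpow_add)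

lemma iter_prime_ge: "1 \<le> n \<Longrightarrow> n + k \<le> iter_prime k n"
proof (induction k)
  case 0
  then show ?case by (simp add: iter_prime_def)
next
  case (Suc k)
  then have "n + k < nth_prime (iter_prime k n)"
    using nth_prime_gt[of "iter_prime k n"] by simp
  then show ?case by (simp add: iter_prime_Suc)
qed

definition iter_bound :: "real \<Rightarrow> nat \<Rightarrow> real" where
  "iter_bound x m = 2 ^ m * x * (\<Prod>i=1..m. ln x + real i * ln (real i) * ln (ln x))"

lemma iter_bound_Suc:
  "iter_bound x (Suc m)
    = 2 * iter_bound x m * (ln x + real (Suc m) * ln (real (Suc m)) * ln (ln x))"
  unfolding iter_bound_def by (simp add: prod.nat_ivl_Suc' algebra_simps)

lemma ln_iter_bound_factor_le:
  fixes x :: real and i m :: nat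
  assumes "1 < x" and "0 \<le> ln (ln x)" and "1 \<le> i" and "i \<le> m"
  shows "ln (ln x + real i * ln (real i) * ln (ln x)) \<le> ln (ln x) + 2 * ln (real (Suc m))"
proof -
  have "0 < ln x" and "0 \<le> real i * ln (real i)"
    using assms by simp_all
  have "ln x + real i * ln (real i) * ln (ln x) \<le> ln x * (1 + real i * ln (real i))"
    using mult_left_mono[OF less_imp_le[OF ln_less_self[OF \<open>0 < ln x\<close>]] \<open>0 \<le> real i * ln (real i)\<close>]
    by (simp add: algebra_simps)
  also have "\<dots> \<le> ln x * real (Suc m) ^ 2"
  proof (rule mult_left_mono)
    have "ln (real i) \<le> real m"
      using ln_le_minus_one[of "real i"] assms by simp
    then have "real i * ln (real i) \<le> real m * real m"
      using assms by (intro mult_mono) auto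
    then show "1 + real i * ln (real i) \<le> real (Suc m) ^ 2"
      by (simp add: power2_eq_square algebra_simps)
  qed (use \<open>0 < ln x\<close> in simp)
  finally have "ln (ln x + real i * ln (real i) * ln (ln x)) \<le> ln (ln x * real (Suc m) ^ 2)"
    using \<open>0 < ln x\<close> \<open>0 \<le> real i * ln (real i)\<close> \<open>0 \<le> ln (ln x)\<close>
    by (subst ln_le_cancel_iff) (auto intro: add_pos_nonneg)
  also have "\<dots> = ln (ln x) + 2 * ln (real (Suc m))"
    using \<open>0 < ln x\<close> by (simp add: ln_mult ln_realpow)
  finally show ?thesis .
qed

lemma mult_ln_Suc_ineq:
  fixes m :: nat and L :: real
  assumes "6 \<le> L"
  shows "real m * ln 2 + real m * L + 2 * real m * ln (real (Suc m))
    \<le> real (Suc m) * ln (real (Suc m)) * L"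
proof (cases "m = 0")
  case False
  define l where "l = ln (real (Suc m))"
  have "0 \<le> l" and "ln 2 \<le> l"
    using False by (simp_all add: l_def)
  have "2 * real m \<le> (real m + 2) * l"
    using ln_one_plus_ge[of "real m"] by (simp add: l_def field_simps)
  then have "2 * real m * L \<le> (real m + 2) * l * L"
    using assms by (intro mult_right_mono) auto
  moreover have "6 * (real m * l) \<le> L * (real m * l)"
    using assms \<open>0 \<le> l\<close> by (intro mult_right_mono) auto
  moreover have "real m * ln 2 \<le> real m * l"
    using \<open>ln 2 \<le> l\<close> by (intro mult_left_mono) auto
  moreover have "real (Suc m) * l * L = (real m + 2) * l * L / 2 + L * (real m * l) / 2"
    by (simp add: field_simps)
  ultimately show ?thesis
    unfolding l_def[symmetric] by linarith
qed simp

lemma ln_iter_bound_le: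
  fixes x :: real
  assumes "1 < x" and L: "6 \<le> ln (ln x)"
  shows "ln (iter_bound x m) \<le> ln x + real (Suc m) * ln (real (Suc m)) * ln (ln x)"
proof -
  let ?a = "\<lambda>i::nat. ln x + real i * ln (real i) * ln (ln x)"
  have "0 < ln x"
    using assms by simp
  have "0 \<le> ln (ln x)"
    using L by linarith
  have a_pos: "0 < ?a i" if "1 \<le> i" for i
    using \<open>0 < ln x\<close> \<open>0 \<le> ln (ln x)\<close> that by (intro add_pos_nonneg mult_nonneg_nonneg) simp_all
  have "0 < (\<Prod>i=1..m. ?a i)"
    using a_pos by (intro prod_pos) simp
  then have "ln (iter_bound x m) = ln (2 ^ m) + ln x + ln (\<Prod>i=1..m. ?a i)"
    unfolding iter_bound_def using assms by (simp add: ln_mult_pos)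
  also have "\<dots> = real m * ln 2 + ln x + (\<Sum>i=1..m. ln (?a i))"
    using ln_prod[of "{1..m}" ?a] a_pos by (force simp: ln_realpow)
  also have "(\<Sum>i=1..m. ln (?a i)) \<le> (\<Sum>i=1..m. ln (ln x) + 2 * ln (real (Suc m)))"
    using assms \<open>0 \<le> ln (ln x)\<close> by (intro sum_mono ln_iter_bound_factor_le) auto
  also have "\<dots> = real m * ln (ln x) + 2 * real m * ln (real (Suc m))"
    by (simp add: algebra_simps)
  finally show ?thesis
    using mult_ln_Suc_ineq[OF L, of m] by linarith
qed

lemma le_ln_ln_if_exp_exp_le:
  fixes a x :: real
  assumes "exp (exp a) \<le> x"
  shows "a \<le> ln (ln x)"
proof -
  have "0 < x"
    using exp_gt_zero assms by (rule less_le_trans)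
  then have "exp a \<le> ln x"
    using assms by (simp add: ln_ge_iff)
  moreover have "0 < ln x"
    using exp_gt_zero \<open>exp a \<le> ln x\<close> by (rule less_le_trans)
  ultimately show ?thesis
    by (simp add: ln_ge_iff)
qed

lemma iter_prime_le_iter_bound:
  fixes x m :: nat
  assumes nth_prime_le: "\<And>y. x \<le> y \<Longrightarrow> real (nth_prime y) \<le> 2 * real y * ln (real y)"
    and x: "exp (exp 6) \<le> real x"
  shows "real (iter_prime m x) \<le> iter_bound (real x) m"
proof -
  have "1 < exp (exp (6::real))"
    by simp
  with x have "1 < real x"
    by linarith
  show ?thesis
  proof (induction m)
    case 0
    show ?case by (simp add: iter_prime_def iter_bound_def)
  next
    case (Suc m)
    let ?B = "iter_bound (real x) m"
    define z where "z = iter_prime m x"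
    have "x \<le> z"
      using iter_prime_ge[of x m] \<open>1 < real x\<close> by (simp add: z_def)
    then have "1 \<le> real z"
      using \<open>1 < real x\<close> by linarith
    have "real (iter_prime (Suc m) x) \<le> 2 * real z * ln (real z)"
      using nth_prime_le[OF \<open>x \<le> z\<close>] by (simp add: iter_prime_Suc z_def)
    also have "\<dots> \<le> 2 * ?B * ln ?B"
      using Suc.IH \<open>1 \<le> real z\<close> by (intro mult_mono) (auto simp: z_def)
    also have "\<dots> \<le> 2 * ?B * (ln x + real (Suc m) * ln (real (Suc m)) * ln (ln x))"
      using Suc.IH \<open>1 \<le> real z\<close> \<open>1 < real x\<close> le_ln_ln_if_exp_exp_le[OF x]
      by (intro mult_left_mono ln_iter_bound_le) (auto simp: z_def)
    also have "\<dots> = iter_bound (real x) (Suc m)"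
      by (rule iter_bound_Suc[symmetric])
    finally show ?case .
  qed
qed

theorem theorem10:
  fixes n :: nat
  assumes "n \<ge> 1"
  shows "\<exists>k0 \<ge> 1. \<forall>k j. k0 \<le> k \<and> k \<le> j \<longrightarrow>
    real (iter_prime j n) \<le> 2 ^ (j - k) * real (iter_prime k n) *
      (\<Prod>i = 1..j - k. ln (real (iter_prime k n)) + real i * ln (real i) * ln (ln (real (iter_prime k n))))"
proof -
  obtain Y where Y: "\<And>y. Y \<le> y \<Longrightarrow> real (nth_prime y) \<le> 2 * real y * ln (real y)"
    using eventually_nth_prime_le unfolding eventually_sequentially by blast
  define k0 where "k0 = max 1 (max Y (nat \<lceil>exp (exp 6 :: real)\<rceil>))"
  show ?thesis
  proof (intro exI[of _ k0] conjI allI impI)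
    show "1 \<le> k0"
      by (simp add: k0_def)
    fix k j
    assume kj: "k0 \<le> k \<and> k \<le> j"
    define x where "x = iter_prime k n"
    have "k0 \<le> x"
      using iter_prime_ge[OF assms, of k] kj by (simp add: x_def)
    then have "Y \<le> x" and "nat \<lceil>exp (exp 6 :: real)\<rceil> \<le> x"
      by (simp_all add: k0_def)
    then have "exp (exp 6) \<le> real x"
      using real_nat_ceiling_ge[of "exp (exp 6)"] of_nat_mono by fastforce
    have "real (iter_prime j n) = real (iter_prime (j - k) x)"
      using kj iter_prime_add[of k "j - k" n] by (simp add: x_def)
    also have "\<dots> \<le> iter_bound (real x) (j - k)"
      using Y \<open>Y \<le> x\<close> \<open>exp (exp 6) \<le> real x\<close> by (intro iter_prime_le_iter_bound) auto
    finally show "real (iter_prime j n) \<le> 2 ^ (j - k) * real (iter_prime k n) *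
      (\<Prod>i = 1..j - k. ln (real (iter_prime k n)) + real i * ln (real i) * ln (ln (real (iter_prime k n))))"
      unfolding iter_bound_def x_def .
  qed
qed

end
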